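(* Let $\mathbb{C}$ be a modified category of interest and $\mathcal{X}=(\partial\colon E\to R)$, $\mathcal{X}'=(\partial'\colon E'\to R')$ crossed modules in $\mathbb{C}$. There is a groupoid $\mathrm{HOM}(\mathcal{X},\mathcal{X}')$ whose objects are the crossed module morphisms $\mathcal{X}\to\mathcal{X}'$ and whose morphisms from $f$ to $g$ are the homotopies $(f_0,s)$ connecting $f$ to $g$ (identities given by the zero derivation, inverses by $s\mapsto -s$, composition by pointwise sum $s+s'$). In particular, the relation on crossed module morphisms $\mathcal{X}\to\mathcal{X}'$ given by "$f\simeq g$ if and only if there exists an $f_0$-derivation $s$ connecting $f$ to $g$" is an equivalence relation.
   Context: A modified category of interest (MCI) is a category $\mathbb{C}$ of groups (written additively) with additional unary and binary operations: $\Omega=\Omega_0\cup\Omega_1\cup\Omega_2$, $\Omega_0=\{0\}$, $\Omega_2'=\Omega_2\setminus\{+\}$ closed under $x*^\circ y=y*x$, with $x*(y+z)=x*y+x*z$, unary operations other than $-$ compatible with $+$ and $*$, $x_1+(x_2*x_3)=(x_2*x_3)+x_1$, and each $(x_1*x_2)\bar*x_3$ expressible as a word in the products $x_i(x_jx_k),(x_jx_k)x_i$, $i\in\{1,2\}$. A derived action of $R$ on $E$ consists of maps $r\cdot e=\sigma(r)+e-\sigma(r)$, $r*e=\sigma(r)*e$ ($*\in\Omega_2'$) induced by a split extension of $R$ by $E$ with section $\sigma$. A crossed module is a morphism $\partial\colon E\to R$ with a derived action satisfying $\partial(r\cdot e)=r+\partial(e)-r$, $\partial(r*e)=r*\partial(e)$,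 $\partial(e)\cdot e'=e+e'-e$, $\partial(e)*e'=e*e'$. A crossed module morphism $(f_1,f_0)$ satisfies $\partial'f_1=f_0\partial$, $f_1(r\cdot e)=f_0(r)\cdot f_1(e)$, $f_1(r*e)=f_0(r)*f_1(e)$. For a morphism $f_0\colon R\to R'$, an $f_0$-derivation is a map $s\colon R\to E'$ with $s(g+h)=\big(f_0(-h)\cdot s(g)\big)+s(h)$ and $s(g*h)=f_0(g)*s(h)+f_0(h)*^\circ s(g)+s(g)*s(h)$ for all $g,h\in R$, $*\in\Omega_2'$. An $f_0$-derivation $s$ connects $f$ to $g$ (a homotopy $(f_0,s)$ from $f$ to $g$) if $g_0(r)=f_0(r)+\partial'(s(r))$ and $g_1(e)=f_1(e)+s(\partial(e))$ for all $r\in R$, $e\in E$. *)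

theory Defs
  imports Main
begin

text \<open>Binary operations other than + are indexed by the type 'o (this is Omega2'),
  unary operations other than - are indexed by the type 'u (this is Omega1').\<close>

record ('a, 'o, 'u) alg =
  carrier :: "'a set"
  plus :: "'a \<Rightarrow> 'a \<Rightarrow> 'a"
  neg :: "'a \<Rightarrow> 'a"
  zero :: "'a"
  bin :: "'o \<Rightarrow> 'a \<Rightarrow> 'a \<Rightarrow> 'a"
  un :: "'u \<Rightarrow> 'a \<Rightarrow> 'a"

datatype ('o, 'u) trm =
    Var nat
  | Zero
  | Plus "('o, 'u) trm" "('o, 'u) trm"
  | Neg "('o, 'u) trm"
  | Bin 'o "('o, 'u) trm" "('o, 'u) trm"
  | UnOp 'u "('o, 'u) trm"

fun eval :: "('a, 'o, 'u, 'z) alg_scheme \<Rightarrow> (nat \<Rightarrow> 'a) \<Rightarrow> ('o, 'u) trm \<Rightarrow> 'a" where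
  "eval A \<rho> (Var n) = \<rho> n"
| "eval A \<rho> Zero = zero A"
| "eval A \<rho> (Plus t u) = plus A (eval A \<rho> t) (eval A \<rho> u)"
| "eval A \<rho> (Neg t) = neg A (eval A \<rho> t)"
| "eval A \<rho> (Bin o' t u) = bin A o' (eval A \<rho> t) (eval A \<rho> u)"
| "eval A \<rho> (UnOp u' t) = un A u' (eval A \<rho> t)"

definition group_alg :: "('a, 'o, 'u) alg \<Rightarrow> bool" where
  "group_alg A \<longleftrightarrow>
     zero A \<in> carrier A
   \<and> (\<forall>x\<in>carrier A. \<forall>y\<in>carrier A. plus A x y \<in> carrier A)
   \<and> (\<forall>x\<in>carrier A. neg A x \<in> carrier A)
   \<and> (\<forall>o'. \<forall>x\<in>carrier A. \<forall>y\<in>carrier A. bin A o' x y \<in> carrier A)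
   \<and> (\<forall>u'. \<forall>x\<in>carrier A. un A u' x \<in> carrier A)
   \<and> (\<forall>x\<in>carrier A. \<forall>y\<in>carrier A. \<forall>z\<in>carrier A.
        plus A (plus A x y) z = plus A x (plus A y z))
   \<and> (\<forall>x\<in>carrier A. plus A (zero A) x = x \<and> plus A x (zero A) = x)
   \<and> (\<forall>x\<in>carrier A. plus A (neg A x) x = zero A \<and> plus A x (neg A x) = zero A)"

definition satisfies :: "('a, 'o, 'u) alg \<Rightarrow> ('o, 'u) trm \<times> ('o, 'u) trm \<Rightarrow> bool" where
  "satisfies A eq \<longleftrightarrow>
     (\<forall>\<rho>. (\<forall>n. \<rho> n \<in> carrier A) \<longrightarrow> eval A \<rho> (fst eq) = eval A \<rho> (snd eq))"

definition in_C :: "('o, 'u) trm rel \<Rightarrow> ('a, 'o, 'u) alg \<Rightarrow> bool" where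
  "in_C Eqs A \<longleftrightarrow> group_alg A \<and> (\<forall>eq\<in>Eqs. satisfies A eq)"

text \<open>Group words in the products x_i(x_j x_k), (x_j x_k) x_i with i in {x1,x2}
  and {i,j,k} = {1,2,3}; variables x1,x2,x3 are Var 0, Var 1, Var 2.\<close>

inductive grp_word :: "('o, 'u) trm \<Rightarrow> bool" where
  "grp_word Zero"
| "grp_word t \<Longrightarrow> grp_word u \<Longrightarrow> grp_word (Plus t u)"
| "grp_word t \<Longrightarrow> grp_word (Neg t)"
| "i \<in> {0, 1} \<Longrightarrow> {i, j, k} = {0, 1, 2::nat} \<Longrightarrow>
     grp_word (Bin o1 (Var i) (Bin o2 (Var j) (Var k)))"
| "i \<in> {0, 1} \<Longrightarrow> {i, j, k} = {0, 1, 2::nat} \<Longrightarrow>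
     grp_word (Bin o1 (Bin o2 (Var j) (Var k)) (Var i))"

text \<open>A modified category of interest, given by its set of identities Eqs (which
  contains the listed axioms) and by the map conv sending * to *^o.\<close>

definition MCI :: "('o, 'u) trm rel \<Rightarrow> ('o \<Rightarrow> 'o) \<Rightarrow> bool" where
  "MCI Eqs conv \<longleftrightarrow>
     (\<forall>o'. (Bin (conv o') (Var 0) (Var 1), Bin o' (Var 1) (Var 0)) \<in> Eqs)
   \<and> (\<forall>o'. (Bin o' (Var 0) (Plus (Var 1) (Var 2)),
             Plus (Bin o' (Var 0) (Var 1)) (Bin o' (Var 0) (Var 2))) \<in> Eqs)
   \<and> (\<forall>u'. (UnOp u' (Plus (Var 0) (Var 1)), Plus (UnOp u' (Var 0)) (UnOp u' (Var 1))) \<in> Eqs)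
   \<and> (\<forall>u' o'. (UnOp u' (Bin o' (Var 0) (Var 1)), Bin o' (UnOp u' (Var 0)) (Var 1)) \<in> Eqs)
   \<and> (\<forall>o'. (Plus (Var 0) (Bin o' (Var 1) (Var 2)),
             Plus (Bin o' (Var 1) (Var 2)) (Var 0)) \<in> Eqs)
   \<and> (\<forall>o1 o2. \<exists>W. grp_word W \<and> (Bin o2 (Bin o1 (Var 0) (Var 1)) (Var 2), W) \<in> Eqs)"

definition hom :: "('a, 'o, 'u) alg \<Rightarrow> ('b, 'o, 'u) alg \<Rightarrow> ('a \<Rightarrow> 'b) \<Rightarrow> bool" where
  "hom A B f \<longleftrightarrow>
     (\<forall>x\<in>carrier A. f x \<in> carrier B)
   \<and> f (zero A) = zero B
   \<and> (\<forall>x\<in>carrier A. \<forall>y\<in>carrier A. f (plus A x y) = plus B (f x) (f y))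
   \<and> (\<forall>x\<in>carrier A. f (neg A x) = neg B (f x))
   \<and> (\<forall>o'. \<forall>x\<in>carrier A. \<forall>y\<in>carrier A. f (bin A o' x y) = bin B o' (f x) (f y))
   \<and> (\<forall>u'. \<forall>x\<in>carrier A. f (un A u' x) = un B u' (f x))"

text \<open>Every split extension has underlying set
  in bijection with R x E, so the extension object is taken on the type 'r \<times> 'e.\<close>

definition derived_action ::
  "('o, 'u) trm rel \<Rightarrow> ('r, 'o, 'u) alg \<Rightarrow> ('e, 'o, 'u) alg \<Rightarrow>
   ('r \<Rightarrow> 'e \<Rightarrow> 'e) \<Rightarrow> ('o \<Rightarrow> 'r \<Rightarrow> 'e \<Rightarrow> 'e) \<Rightarrow> bool" where
  "derived_action Eqs R E act bact \<longleftrightarrow>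
     (\<forall>r\<in>carrier R. \<forall>e\<in>carrier E. act r e \<in> carrier E \<and> (\<forall>o'. bact o' r e \<in> carrier E))
   \<and> (\<exists>(B :: ('r \<times> 'e, 'o, 'u) alg) p i \<sigma>.
        in_C Eqs B \<and> hom B R p \<and> hom E B i \<and> hom R B \<sigma>
      \<and> inj_on i (carrier E)
      \<and> i ` carrier E = {b \<in> carrier B. p b = zero R}
      \<and> (\<forall>r\<in>carrier R. p (\<sigma> r) = r)
      \<and> (\<forall>r\<in>carrier R. \<forall>e\<in>carrier E.
           i (act r e) = plus B (plus B (\<sigma> r) (i e)) (neg B (\<sigma> r))
         \<and> (\<forall>o'. i (bact o' r e) = bin B o' (\<sigma> r) (i e))))"

record ('e, 'r, 'o, 'u) xmod =
  xE :: "('e, 'o, 'u) alg"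
  xR :: "('r, 'o, 'u) alg"
  bd :: "'e \<Rightarrow> 'r"
  act :: "'r \<Rightarrow> 'e \<Rightarrow> 'e"
  bact :: "'o \<Rightarrow> 'r \<Rightarrow> 'e \<Rightarrow> 'e"

definition crossed_module :: "('o, 'u) trm rel \<Rightarrow> ('e, 'r, 'o, 'u) xmod \<Rightarrow> bool" where
  "crossed_module Eqs X \<longleftrightarrow>
     in_C Eqs (xE X) \<and> in_C Eqs (xR X)
   \<and> hom (xE X) (xR X) (bd X)
   \<and> derived_action Eqs (xR X) (xE X) (act X) (bact X)
   \<and> (\<forall>r\<in>carrier (xR X). \<forall>e\<in>carrier (xE X).
        bd X (act X r e) = plus (xR X) (plus (xR X) r (bd X e)) (neg (xR X) r)
      \<and> (\<forall>o'. bd X (bact X o' r e) = bin (xR X) o' r (bd X e)))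
   \<and> (\<forall>e\<in>carrier (xE X). \<forall>e'\<in>carrier (xE X).
        act X (bd X e) e' = plus (xE X) (plus (xE X) e e') (neg (xE X) e)
      \<and> (\<forall>o'. bact X o' (bd X e) e' = bin (xE X) o' e e'))"

definition xmod_morphism ::
  "('e, 'r, 'o, 'u) xmod \<Rightarrow> ('e2, 'r2, 'o, 'u) xmod \<Rightarrow> ('e \<Rightarrow> 'e2) \<times> ('r \<Rightarrow> 'r2) \<Rightarrow> bool" where
  "xmod_morphism X X' f \<longleftrightarrow>
     hom (xE X) (xE X') (fst f) \<and> hom (xR X) (xR X') (snd f)
   \<and> (\<forall>e\<in>carrier (xE X). bd X' (fst f e) = snd f (bd X e))
   \<and> (\<forall>r\<in>carrier (xR X). \<forall>e\<in>carrier (xE X).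
        fst f (act X r e) = act X' (snd f r) (fst f e)
      \<and> (\<forall>o'. fst f (bact X o' r e) = bact X' o' (snd f r) (fst f e)))"

definition derivation ::
  "('o \<Rightarrow> 'o) \<Rightarrow> ('e, 'r, 'o, 'u) xmod \<Rightarrow> ('e2, 'r2, 'o, 'u) xmod \<Rightarrow>
   ('r \<Rightarrow> 'r2) \<Rightarrow> ('r \<Rightarrow> 'e2) \<Rightarrow> bool" where
  "derivation conv X X' f0 s \<longleftrightarrow>
     (\<forall>r\<in>carrier (xR X). s r \<in> carrier (xE X'))
   \<and> (\<forall>g\<in>carrier (xR X). \<forall>h\<in>carrier (xR X).
        s (plus (xR X) g h) = plus (xE X') (act X' (f0 (neg (xR X) h)) (s g)) (s h))
   \<and> (\<forall>o'. \<forall>g\<in>carrier (xR X). \<forall>h\<in>carrier (xR X).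
        s (bin (xR X) o' g h) =
          plus (xE X')
            (plus (xE X') (bact X' o' (f0 g) (s h)) (bact X' (conv o') (f0 h) (s g)))
            (bin (xE X') o' (s g) (s h)))"

definition connects ::
  "('e, 'r, 'o, 'u) xmod \<Rightarrow> ('e2, 'r2, 'o, 'u) xmod \<Rightarrow>
   ('e \<Rightarrow> 'e2) \<times> ('r \<Rightarrow> 'r2) \<Rightarrow> ('e \<Rightarrow> 'e2) \<times> ('r \<Rightarrow> 'r2) \<Rightarrow> ('r \<Rightarrow> 'e2) \<Rightarrow> bool" where
  "connects X X' f g s \<longleftrightarrow>
     (\<forall>r\<in>carrier (xR X). snd g r = plus (xR X') (snd f r) (bd X' (s r)))
   \<and> (\<forall>e\<in>carrier (xE X). fst g e = plus (xE X') (fst f e) (s (bd X e)))"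

definition homotopic ::
  "('o \<Rightarrow> 'o) \<Rightarrow> ('e, 'r, 'o, 'u) xmod \<Rightarrow> ('e2, 'r2, 'o, 'u) xmod \<Rightarrow>
   (('e \<Rightarrow> 'e2) \<times> ('r \<Rightarrow> 'r2)) rel" where
  "homotopic conv X X' =
     {(f, g). xmod_morphism X X' f \<and> xmod_morphism X X' g
            \<and> (\<exists>s. derivation conv X X' (snd f) s \<and> connects X X' f g s)}"

end

theory Submission
  imports Defs
begin

text \<open>Along a homotopy s from f to g, the actions of g0 r = f0 r + \<partial>'(s r) on E' are expressed
  through those of f0 r by the Peiffer identities of X': g0 r acts as f0 r followed by conjugation
  with s r, and g0 r * y = f0 r * y + s r * y. With this, the derivation identities for the zero
  map, for -s and for s + s' reduce to computations in E' in which every product and every value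
  of a *-action is central, so the sums can be freely rearranged. The needed laws of a derived
  action (additivity, centrality) are read off in the split extension inducing it.\<close>

locale alg_group =
  fixes A :: "('a, 'o, 'u) alg"
  assumes group: "group_alg A"
begin

lemma zero_closed [simp]: "zero A \<in> carrier A"
  and plus_closed [simp]: "x \<in> carrier A \<Longrightarrow> y \<in> carrier A \<Longrightarrow> plus A x y \<in> carrier A"
  and neg_closed [simp]: "x \<in> carrier A \<Longrightarrow> neg A x \<in> carrier A"
  and bin_closed [simp]: "x \<in> carrier A \<Longrightarrow> y \<in> carrier A \<Longrightarrow> bin A o' x y \<in> carrier A"
  and plus_assoc [simp]: "x \<in> carrier A \<Longrightarrow> y \<in> carrier A \<Longrightarrow> z \<in> carrier A \<Longrightarrow>
                           plus A (plus A x y) z = plus A x (plus A y z)"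
  and zero_left [simp]: "x \<in> carrier A \<Longrightarrow> plus A (zero A) x = x"
  and zero_right [simp]: "x \<in> carrier A \<Longrightarrow> plus A x (zero A) = x"
  and neg_left [simp]: "x \<in> carrier A \<Longrightarrow> plus A (neg A x) x = zero A"
  and neg_right [simp]: "x \<in> carrier A \<Longrightarrow> plus A x (neg A x) = zero A"
  using group unfolding group_alg_def by blast+

lemma plus_neg_cancel_left [simp]:
  "x \<in> carrier A \<Longrightarrow> y \<in> carrier A \<Longrightarrow> plus A x (plus A (neg A x) y) = y"
  by (metis plus_assoc zero_left neg_closed neg_right)

lemma neg_plus_cancel_left [simp]:
  "x \<in> carrier A \<Longrightarrow> y \<in> carrier A \<Longrightarrow> plus A (neg A x) (plus A x y) = y"
  by (metis plus_assoc zero_left neg_closed neg_left)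

lemma plus_left_cancel [simp]:
  "x \<in> carrier A \<Longrightarrow> y \<in> carrier A \<Longrightarrow> z \<in> carrier A \<Longrightarrow> plus A x y = plus A x z \<longleftrightarrow> y = z"
  by (metis neg_plus_cancel_left)

lemma neg_unique: "x \<in> carrier A \<Longrightarrow> y \<in> carrier A \<Longrightarrow> plus A x y = zero A \<Longrightarrow> x = neg A y"
  by (metis plus_assoc zero_left neg_closed neg_right zero_right)

lemma neg_neg [simp]: "x \<in> carrier A \<Longrightarrow> neg A (neg A x) = x"
  by (metis neg_closed neg_unique neg_right)

lemma neg_zero [simp]: "neg A (zero A) = zero A"
  by (metis neg_unique zero_left zero_closed)

lemma neg_plus [simp]:
  "x \<in> carrier A \<Longrightarrow> y \<in> carrier A \<Longrightarrow> neg A (plus A x y) = plus A (neg A y) (neg A x)"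
  by (rule neg_unique [symmetric]) simp_all

lemma idempotent_eq_zero: "x \<in> carrier A \<Longrightarrow> plus A x x = x \<Longrightarrow> x = zero A"
  by (metis plus_left_cancel zero_right zero_closed)

definition central :: "'a \<Rightarrow> bool" where
  "central c \<longleftrightarrow> c \<in> carrier A \<and> (\<forall>x\<in>carrier A. plus A x c = plus A c x)"

lemma central_commute: "central c \<Longrightarrow> x \<in> carrier A \<Longrightarrow> plus A x c = plus A c x"
  unfolding central_def by blast

text \<open>Permutative rules: the simplifier uses them for ordered rewriting, which sorts any sum
  of central elements into a normal form.\<close>

lemma central_ac:
  "central x \<Longrightarrow> central y \<Longrightarrow> plus A x y = plus A y x"
  "central x \<Longrightarrow> central y \<Longrightarrow> z \<in> carrier A \<Longrightarrow> plus A x (plus A y z) = plus A y (plus A x z)"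
  unfolding central_def by (blast, metis plus_assoc)

lemma central_neg: "central c \<Longrightarrow> central (neg A c)"
  unfolding central_def by (metis neg_closed neg_neg neg_plus)

end

lemma in_C_group: "in_C Eqs A \<Longrightarrow> alg_group A"
  unfolding in_C_def by unfold_locales blast

lemma in_C_satisfies:
  assumes "in_C Eqs A" "eq \<in> Eqs" "\<And>n. \<rho> n \<in> carrier A"
  shows "eval A \<rho> (fst eq) = eval A \<rho> (snd eq)"
  using assms unfolding in_C_def satisfies_def by blast

locale mci_alg = alg_group A for A :: "('a, 'o, 'u) alg" +
  fixes Eqs :: "('o, 'u) trm rel" and conv :: "'o \<Rightarrow> 'o"
  assumes mci: "MCI Eqs conv" and in_C: "in_C Eqs A"
begin

lemma satisfies_MCI:
  assumes "eq \<in> Eqs" "x \<in> carrier A" "y \<in> carrier A" "z \<in> carrier A"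
  shows "eval A (\<lambda>n. if n = 0 then x else if n = 1 then y else z) (fst eq)
       = eval A (\<lambda>n. if n = 0 then x else if n = 1 then y else z) (snd eq)"
  using in_C_satisfies [OF in_C] assms by simp

lemma bin_conv [simp]:
  "x \<in> carrier A \<Longrightarrow> y \<in> carrier A \<Longrightarrow> bin A (conv o') x y = bin A o' y x"
  using satisfies_MCI [of "(Bin (conv o') (Var 0) (Var 1), Bin o' (Var 1) (Var 0))" x y x] mci
  unfolding MCI_def by auto

lemma bin_distrib_left:
  "x \<in> carrier A \<Longrightarrow> y \<in> carrier A \<Longrightarrow> z \<in> carrier A \<Longrightarrow>
   bin A o' x (plus A y z) = plus A (bin A o' x y) (bin A o' x z)"
  using satisfies_MCI [of "(Bin o' (Var 0) (Plus (Var 1) (Var 2)),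
                            Plus (Bin o' (Var 0) (Var 1)) (Bin o' (Var 0) (Var 2)))" x y z] mci
  unfolding MCI_def by auto

lemma bin_distrib_right:
  "x \<in> carrier A \<Longrightarrow> y \<in> carrier A \<Longrightarrow> z \<in> carrier A \<Longrightarrow>
   bin A o' (plus A x y) z = plus A (bin A o' x z) (bin A o' y z)"
  by (metis bin_conv bin_distrib_left plus_closed)

lemma bin_central [simp]: "x \<in> carrier A \<Longrightarrow> y \<in> carrier A \<Longrightarrow> central (bin A o' x y)"
  using satisfies_MCI [of "(Plus (Var 0) (Bin o' (Var 1) (Var 2)),
                            Plus (Bin o' (Var 1) (Var 2)) (Var 0))" _ x y] mci
  unfolding MCI_def central_def by auto

lemma bin_zero_right [simp]: "x \<in> carrier A \<Longrightarrow> bin A o' x (zero A) = zero A"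
  by (metis idempotent_eq_zero bin_closed zero_left bin_distrib_left zero_closed)

lemma bin_neg_right [simp]:
  "x \<in> carrier A \<Longrightarrow> y \<in> carrier A \<Longrightarrow> bin A o' x (neg A y) = neg A (bin A o' x y)"
  by (metis bin_closed bin_zero_right bin_distrib_left neg_closed neg_unique neg_left)

lemma bin_neg_left [simp]:
  "x \<in> carrier A \<Longrightarrow> y \<in> carrier A \<Longrightarrow> bin A o' (neg A x) y = neg A (bin A o' x y)"
  by (metis bin_conv bin_neg_right neg_closed)

end

lemma hom_closed: "hom A B f \<Longrightarrow> x \<in> carrier A \<Longrightarrow> f x \<in> carrier B"
  and hom_zero: "hom A B f \<Longrightarrow> f (zero A) = zero B"
  and hom_plus: "hom A B f \<Longrightarrow> x \<in> carrier A \<Longrightarrow> y \<in> carrier A \<Longrightarrow> f (plus A x y) = plus B (f x) (f y)"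
  and hom_neg: "hom A B f \<Longrightarrow> x \<in> carrier A \<Longrightarrow> f (neg A x) = neg B (f x)"
  and hom_bin: "hom A B f \<Longrightarrow> x \<in> carrier A \<Longrightarrow> y \<in> carrier A \<Longrightarrow> f (bin A o' x y) = bin B o' (f x) (f y)"
  unfolding hom_def by blast+

lemmas hom_simps = hom_closed hom_zero hom_plus hom_neg hom_bin

locale mci_action =
  fixes Eqs :: "('o, 'u) trm rel" and conv :: "'o \<Rightarrow> 'o"
    and R :: "('r, 'o, 'u) alg" and E :: "('e, 'o, 'u) alg"
    and act :: "'r \<Rightarrow> 'e \<Rightarrow> 'e" and bact :: "'o \<Rightarrow> 'r \<Rightarrow> 'e \<Rightarrow> 'e"
  assumes mci: "MCI Eqs conv" and in_C_R: "in_C Eqs R" and in_C_E: "in_C Eqs E"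
    and derived: "derived_action Eqs R E act bact"
begin

sublocale R: alg_group R by (rule in_C_group [OF in_C_R])
sublocale E: mci_alg E Eqs conv by (intro_locales, rule in_C_group [OF in_C_E]) (unfold_locales, fact mci, fact in_C_E)

lemma act_closed [simp]: "r \<in> carrier R \<Longrightarrow> e \<in> carrier E \<Longrightarrow> act r e \<in> carrier E"
  and bact_closed [simp]: "r \<in> carrier R \<Longrightarrow> e \<in> carrier E \<Longrightarrow> bact o' r e \<in> carrier E"
  using derived unfolding derived_action_def by blast+

text \<open>The laws of a derived action hold because their images under the embedding of E into
  the split extension are identities of the extension.\<close>

lemma act_compose:
    "r \<in> carrier R \<Longrightarrow> r' \<in> carrier R \<Longrightarrow> e \<in> carrier E \<Longrightarrow> act (plus R r r') e = act r (act r' e)"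
  and act_plus [simp]:
    "r \<in> carrier R \<Longrightarrow> e \<in> carrier E \<Longrightarrow> e' \<in> carrier E \<Longrightarrow>
     act r (plus E e e') = plus E (act r e) (act r e')"
  and act_unit [simp]: "e \<in> carrier E \<Longrightarrow> act (zero R) e = e"
  and bact_plus_left:
    "r \<in> carrier R \<Longrightarrow> r' \<in> carrier R \<Longrightarrow> e \<in> carrier E \<Longrightarrow>
     bact o' (plus R r r') e = plus E (bact o' r e) (bact o' r' e)"
  and bact_plus_right [simp]:
    "r \<in> carrier R \<Longrightarrow> e \<in> carrier E \<Longrightarrow> e' \<in> carrier E \<Longrightarrow>
     bact o' r (plus E e e') = plus E (bact o' r e) (bact o' r e')"
  and bact_commute:
    "r \<in> carrier R \<Longrightarrow> e \<in> carrier E \<Longrightarrow> e' \<in> carrier E \<Longrightarrow>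
     plus E e' (bact o' r e) = plus E (bact o' r e) e'"
proof -
  obtain B :: "('r \<times> 'e, 'o, 'u) alg" and p i \<sigma> where
    B: "in_C Eqs B" and i: "hom E B i" and \<sigma>: "hom R B \<sigma>" and inj: "inj_on i (carrier E)"
    and induced: "\<And>r e. r \<in> carrier R \<Longrightarrow> e \<in> carrier E \<Longrightarrow>
           i (act r e) = plus B (plus B (\<sigma> r) (i e)) (neg B (\<sigma> r))
         \<and> (\<forall>o'. i (bact o' r e) = bin B o' (\<sigma> r) (i e))"
    using derived unfolding derived_action_def by blast
  interpret B: mci_alg B Eqs conv
    by (intro_locales, rule in_C_group [OF B]) (unfold_locales, fact mci, fact B)
  have reflect: "x = y" if "x \<in> carrier E" "y \<in> carrier E" "i x = i y" for x y
    using inj that by (meson inj_onD)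
  note simps = induced hom_simps [OF i] hom_simps [OF \<sigma>]
  show "r \<in> carrier R \<Longrightarrow> r' \<in> carrier R \<Longrightarrow> e \<in> carrier E \<Longrightarrow> act (plus R r r') e = act r (act r' e)"
    by (rule reflect) (simp_all add: simps)
  show "r \<in> carrier R \<Longrightarrow> e \<in> carrier E \<Longrightarrow> e' \<in> carrier E \<Longrightarrow>
        act r (plus E e e') = plus E (act r e) (act r e')"
    by (rule reflect) (simp_all add: simps)
  show "e \<in> carrier E \<Longrightarrow> act (zero R) e = e"
    by (rule reflect) (simp_all add: simps)
  show "r \<in> carrier R \<Longrightarrow> r' \<in> carrier R \<Longrightarrow> e \<in> carrier E \<Longrightarrow>
        bact o' (plus R r r') e = plus E (bact o' r e) (bact o' r' e)"
    by (rule reflect) (simp_all add: simps B.bin_distrib_right)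
  show "r \<in> carrier R \<Longrightarrow> e \<in> carrier E \<Longrightarrow> e' \<in> carrier E \<Longrightarrow>
        bact o' r (plus E e e') = plus E (bact o' r e) (bact o' r e')"
    by (rule reflect) (simp_all add: simps B.bin_distrib_left)
  show "r \<in> carrier R \<Longrightarrow> e \<in> carrier E \<Longrightarrow> e' \<in> carrier E \<Longrightarrow>
        plus E e' (bact o' r e) = plus E (bact o' r e) e'"
    by (rule reflect) (auto simp: simps intro: B.central_commute)
qed

lemma bact_central [simp]: "r \<in> carrier R \<Longrightarrow> e \<in> carrier E \<Longrightarrow> E.central (bact o' r e)"
  unfolding E.central_def by (simp add: bact_commute)

lemma act_zero [simp]: "r \<in> carrier R \<Longrightarrow> act r (zero E) = zero E"
  by (metis E.idempotent_eq_zero E.zero_right E.zero_closed act_closed act_plus)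

lemma act_neg [simp]: "r \<in> carrier R \<Longrightarrow> e \<in> carrier E \<Longrightarrow> act r (neg E e) = neg E (act r e)"
  by (metis E.neg_unique E.neg_left E.neg_closed act_closed act_plus act_zero)

lemma bact_zero [simp]: "r \<in> carrier R \<Longrightarrow> bact o' r (zero E) = zero E"
  by (metis E.idempotent_eq_zero E.zero_right E.zero_closed bact_closed bact_plus_right)

lemma bact_neg [simp]: "r \<in> carrier R \<Longrightarrow> e \<in> carrier E \<Longrightarrow> bact o' r (neg E e) = neg E (bact o' r e)"
  by (metis E.neg_unique E.neg_left E.neg_closed bact_closed bact_plus_right bact_zero)

end

locale xmod_pair =
  fixes Eqs :: "('o, 'u) trm rel" and conv :: "'o \<Rightarrow> 'o"
    and X :: "('e, 'r, 'o, 'u) xmod" and X' :: "('e2, 'r2, 'o, 'u) xmod"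
  assumes mci: "MCI Eqs conv"
    and xmod: "crossed_module Eqs X" and xmod': "crossed_module Eqs X'"
begin

sublocale R: alg_group "xR X"
  using xmod unfolding crossed_module_def by (blast intro: in_C_group)

sublocale X': mci_action Eqs conv "xR X'" "xE X'" "act X'" "bact X'"
  using mci xmod' unfolding crossed_module_def by unfold_locales blast+

lemma bd_hom: "hom (xE X) (xR X) (bd X)"
  using xmod unfolding crossed_module_def by blast

lemma bd'_hom: "hom (xE X') (xR X') (bd X')"
  using xmod' unfolding crossed_module_def by blast

lemmas bd'_simps [simp] = hom_simps [OF bd'_hom]

lemma act_bd [simp]:
  "e \<in> carrier (xE X') \<Longrightarrow> e' \<in> carrier (xE X') \<Longrightarrow>
   act X' (bd X' e) e' = plus (xE X') (plus (xE X') e e') (neg (xE X') e)"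
  and bact_bd [simp]:
  "e \<in> carrier (xE X') \<Longrightarrow> e' \<in> carrier (xE X') \<Longrightarrow> bact X' o' (bd X' e) e' = bin (xE X') o' e e'"
  using xmod' unfolding crossed_module_def by blast+

lemma derivation_closed:
  "derivation conv X X' f0 s \<Longrightarrow> r \<in> carrier (xR X) \<Longrightarrow> s r \<in> carrier (xE X')"
  and derivation_plus:
  "derivation conv X X' f0 s \<Longrightarrow> g \<in> carrier (xR X) \<Longrightarrow> h \<in> carrier (xR X) \<Longrightarrow>
   s (plus (xR X) g h) = plus (xE X') (act X' (f0 (neg (xR X) h)) (s g)) (s h)"
  and derivation_bin:
  "derivation conv X X' f0 s \<Longrightarrow> g \<in> carrier (xR X) \<Longrightarrow> h \<in> carrier (xR X) \<Longrightarrow>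
   s (bin (xR X) o' g h) =
     plus (xE X') (plus (xE X') (bact X' o' (f0 g) (s h)) (bact X' (conv o') (f0 h) (s g)))
       (bin (xE X') o' (s g) (s h))"
  unfolding derivation_def by blast+

lemma connects_R:
  "connects X X' f g s \<Longrightarrow> r \<in> carrier (xR X) \<Longrightarrow> snd g r = plus (xR X') (snd f r) (bd X' (s r))"
  and connects_E:
  "connects X X' f g s \<Longrightarrow> e \<in> carrier (xE X) \<Longrightarrow> fst g e = plus (xE X') (fst f e) (s (bd X e))"
  unfolding connects_def by blast+

lemma xmod_morphism_homs:
  "xmod_morphism X X' f \<Longrightarrow> hom (xE X) (xE X') (fst f)"
  "xmod_morphism X X' f \<Longrightarrow> hom (xR X) (xR X') (snd f)"
  unfolding xmod_morphism_def by blast+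

context
  fixes f :: "('e \<Rightarrow> 'e2) \<times> ('r \<Rightarrow> 'r2)" and s
  assumes f0: "hom (xR X) (xR X') (snd f)" and s: "derivation conv X X' (snd f) s"
begin

lemma derivation_zero: "s (zero (xR X)) = zero (xE X')"
proof -
  have "s (zero (xR X)) = plus (xE X') (s (zero (xR X))) (s (zero (xR X)))"
    using derivation_plus [OF s, of "zero (xR X)" "zero (xR X)"] derivation_closed [OF s]
    by (simp add: hom_simps [OF f0])
  then show ?thesis
    using derivation_closed [OF s] X'.E.idempotent_eq_zero by simp
qed

lemma derivation_neg:
  assumes b: "b \<in> carrier (xR X)"
  shows "act X' (snd f (neg (xR X) b)) (s (neg (xR X) b)) = neg (xE X') (s b)"
proof (rule X'.E.neg_unique)
  show "plus (xE X') (act X' (snd f (neg (xR X) b)) (s (neg (xR X) b))) (s b) = zero (xE X')"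
    using derivation_plus [OF s, of "neg (xR X) b" b] b by (simp add: derivation_zero)
qed (use b derivation_closed [OF s] hom_simps [OF f0] in simp_all)

lemma act_connected:
  assumes c: "connects X X' f g s" and b: "b \<in> carrier (xR X)" and y: "y \<in> carrier (xE X')"
  shows "act X' (snd g (neg (xR X) b)) y
       = plus (xE X') (neg (xE X') (s b)) (plus (xE X') (act X' (snd f (neg (xR X) b)) y) (s b))"
proof -
  have "act X' (snd g (neg (xR X) b)) y = act X' (snd f (neg (xR X) b)) (act X' (bd X' (s (neg (xR X) b))) y)"
    using connects_R [OF c, of "neg (xR X) b"] b y derivation_closed [OF s]
    by (simp add: hom_simps [OF f0] X'.act_compose)
  also have "\<dots> = plus (xE X') (neg (xE X') (s b)) (plus (xE X') (act X' (snd f (neg (xR X) b)) y) (s b))"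
    using b y derivation_closed [OF s] derivation_neg [OF b] by (simp add: hom_simps [OF f0])
  finally show ?thesis .
qed

lemma bact_connected:
  assumes c: "connects X X' f g s" and a: "a \<in> carrier (xR X)" and y: "y \<in> carrier (xE X')"
  shows "bact X' o' (snd g a) y = plus (xE X') (bact X' o' (snd f a) y) (bin (xE X') o' (s a) y)"
  using connects_R [OF c] a y derivation_closed [OF s] by (simp add: hom_simps [OF f0] X'.bact_plus_left)

end

lemma homotopy_refl:
  assumes f: "xmod_morphism X X' f"
  shows "derivation conv X X' (snd f) (\<lambda>r. zero (xE X')) \<and> connects X X' f f (\<lambda>r. zero (xE X'))"
  unfolding derivation_def connects_def
  by (auto simp: hom_simps [OF xmod_morphism_homs(1) [OF f]] hom_simps [OF xmod_morphism_homs(2) [OF f]])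

lemma homotopy_inverse:
  assumes f: "xmod_morphism X X' f"
    and s: "derivation conv X X' (snd f) s" and c: "connects X X' f g s"
  shows "derivation conv X X' (snd g) (\<lambda>r. neg (xE X') (s r)) \<and> connects X X' g f (\<lambda>r. neg (xE X') (s r))"
proof -
  note f0 = xmod_morphism_homs(2) [OF f] and s_closed = derivation_closed [OF s]
  have plus_law: "neg (xE X') (s (plus (xR X) a b)) =
      plus (xE X') (act X' (snd g (neg (xR X) b)) (neg (xE X') (s a))) (neg (xE X') (s b))"
    if "a \<in> carrier (xR X)" "b \<in> carrier (xR X)" for a b
    using that derivation_plus [OF s that] act_connected [OF f0 s c] s_closed by (simp add: hom_simps [OF f0])
  have bin_law: "neg (xE X') (s (bin (xR X) o' a b)) =
      plus (xE X') (plus (xE X') (bact X' o' (snd g a) (neg (xE X') (s b)))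
          (bact X' (conv o') (snd g b) (neg (xE X') (s a))))
        (bin (xE X') o' (neg (xE X') (s a)) (neg (xE X') (s b)))"
    if "a \<in> carrier (xR X)" "b \<in> carrier (xR X)" for a b o'
    using that derivation_bin [OF s that] bact_connected [OF f0 s c] s_closed
    by (simp add: hom_simps [OF f0] X'.E.central_ac X'.E.central_neg)
  show ?thesis
    unfolding derivation_def connects_def
    using plus_law bin_law connects_R [OF c] connects_E [OF c] s_closed
    by (simp add: hom_simps [OF f0] hom_simps [OF xmod_morphism_homs(1) [OF f]] hom_simps [OF bd_hom])
qed

lemma homotopy_compose:
  assumes f: "xmod_morphism X X' f"
    and s: "derivation conv X X' (snd f) s" and c: "connects X X' f g s"
    and s': "derivation conv X X' (snd g) s'" and c': "connects X X' g h s'"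
  shows "derivation conv X X' (snd f) (\<lambda>r. plus (xE X') (s r) (s' r))
       \<and> connects X X' f h (\<lambda>r. plus (xE X') (s r) (s' r))"
proof -
  note f0 = xmod_morphism_homs(2) [OF f]
    and s_closed = derivation_closed [OF s] and s'_closed = derivation_closed [OF s']
  have plus_law: "plus (xE X') (s (plus (xR X) a b)) (s' (plus (xR X) a b)) =
      plus (xE X') (act X' (snd f (neg (xR X) b)) (plus (xE X') (s a) (s' a))) (plus (xE X') (s b) (s' b))"
    if "a \<in> carrier (xR X)" "b \<in> carrier (xR X)" for a b
    using that derivation_plus [OF s that] derivation_plus [OF s' that] act_connected [OF f0 s c]
      s_closed s'_closed
    by (simp add: hom_simps [OF f0])
  have bin_law: "plus (xE X') (s (bin (xR X) o' a b)) (s' (bin (xR X) o' a b)) =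
      plus (xE X') (plus (xE X') (bact X' o' (snd f a) (plus (xE X') (s b) (s' b)))
          (bact X' (conv o') (snd f b) (plus (xE X') (s a) (s' a))))
        (bin (xE X') o' (plus (xE X') (s a) (s' a)) (plus (xE X') (s b) (s' b)))"
    if "a \<in> carrier (xR X)" "b \<in> carrier (xR X)" for a b o'
    using that derivation_bin [OF s that] derivation_bin [OF s' that] bact_connected [OF f0 s c]
      s_closed s'_closed
    by (simp add: hom_simps [OF f0] X'.E.bin_distrib_left X'.E.bin_distrib_right X'.E.central_ac)
  show ?thesis
    unfolding derivation_def connects_def
    using plus_law bin_law connects_R [OF c] connects_E [OF c] connects_R [OF c'] connects_E [OF c']
      s_closed s'_closed
    by (simp add: hom_simps [OF f0] hom_simps [OF xmod_morphism_homs(1) [OF f]] hom_simps [OF bd_hom])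
qed

lemma homotopic_equiv: "equiv {f. xmod_morphism X X' f} (homotopic conv X X')"
proof (rule equivI)
  show "homotopic conv X X' \<subseteq> {f. xmod_morphism X X' f} \<times> {f. xmod_morphism X X' f}"
    unfolding homotopic_def by auto
  show "refl_on {f. xmod_morphism X X' f} (homotopic conv X X')"
    unfolding refl_on_def homotopic_def using homotopy_refl by blast
  show "sym (homotopic conv X X')"
    unfolding sym_def homotopic_def using homotopy_inverse by blast
  show "trans (homotopic conv X X')"
    unfolding trans_def homotopic_def using homotopy_compose by blast
qed

end

theorem mainTheorem5:
  fixes Eqs :: "('o, 'u) trm rel" and conv :: "'o \<Rightarrow> 'o"
    and X :: "('e, 'r, 'o, 'u) xmod" and X' :: "('e2, 'r2, 'o, 'u) xmod"
  assumes "MCI Eqs conv"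
    and "crossed_module Eqs X" and "crossed_module Eqs X'"
  shows
    \<comment> \<open>identities: the zero derivation\<close>
    "(\<forall>f. xmod_morphism X X' f \<longrightarrow>
        derivation conv X X' (snd f) (\<lambda>r. zero (xE X'))
      \<and> connects X X' f f (\<lambda>r. zero (xE X')))
   \<comment> \<open>inverses: s \<mapsto> -s\<close>
   \<and> (\<forall>f g s. xmod_morphism X X' f \<longrightarrow> xmod_morphism X X' g \<longrightarrow>
        derivation conv X X' (snd f) s \<longrightarrow> connects X X' f g s \<longrightarrow>
        derivation conv X X' (snd g) (\<lambda>r. neg (xE X') (s r))
      \<and> connects X X' g f (\<lambda>r. neg (xE X') (s r)))
   \<comment> \<open>composition: pointwise sum s + s'\<close>
   \<and> (\<forall>f g h s s'. xmod_morphism X X' f \<longrightarrow> xmod_morphism X X' g \<longrightarrow> xmod_morphism X X' h \<longrightarrow>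
        derivation conv X X' (snd f) s \<longrightarrow> connects X X' f g s \<longrightarrow>
        derivation conv X X' (snd g) s' \<longrightarrow> connects X X' g h s' \<longrightarrow>
        derivation conv X X' (snd f) (\<lambda>r. plus (xE X') (s r) (s' r))
      \<and> connects X X' f h (\<lambda>r. plus (xE X') (s r) (s' r)))
   \<comment> \<open>groupoid laws (pointwise on the carrier of R)\<close>
   \<and> (\<forall>s s' s''. (\<forall>r\<in>carrier (xR X). s r \<in> carrier (xE X') \<and> s' r \<in> carrier (xE X')
                                      \<and> s'' r \<in> carrier (xE X')) \<longrightarrow>
        (\<forall>r\<in>carrier (xR X).
           plus (xE X') (plus (xE X') (s r) (s' r)) (s'' r)
             = plus (xE X') (s r) (plus (xE X') (s' r) (s'' r))
         \<and> plus (xE X') (zero (xE X')) (s r) = s r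
         \<and> plus (xE X') (s r) (zero (xE X')) = s r
         \<and> plus (xE X') (s r) (neg (xE X') (s r)) = zero (xE X')
         \<and> plus (xE X') (neg (xE X') (s r)) (s r) = zero (xE X')))
   \<comment> \<open>in particular: homotopy is an equivalence relation on crossed module morphisms\<close>
   \<and> equiv {f. xmod_morphism X X' f} (homotopic conv X X')"
proof -
  interpret xmod_pair Eqs conv X X' using assms by unfold_locales
  show ?thesis
    using homotopy_refl homotopy_inverse homotopy_compose homotopic_equiv by simp
qed

end
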